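(* For $n\ge2$ let $E_n=(\mathbb{R}^2,\|\cdot\|_n)$ with $\|(x,y)\|_n=(|x|^n+|y|^n)^{1/n}$, and let $X$ be the Banach space of sequences $u=(u_n)_{n\ge2}$ with $u_n\in E_n$ and $\|u\|=\left(\sum_{n=2}^\infty\|u_n\|_n^2\right)^{1/2}<\infty$. Let $B_X=\{u\in X:\|u\|\le1\}$ and $B=\{u\in X:\|u\|\ge2\}$. Then there exist bounded sequences $\{x_n\},\{z_n\}\subset B_X$ and $\{y_n\}\subset B$ with $\lim_n\|x_n-y_n\|=\lim_n\|z_n-y_n\|=\mathrm{dist}(B_X,B)=1$ and $\lim_n\|x_n-z_n\|=2$; in particular the ordered pair $(B_X,B)$ has neither the $UC$ property nor the $BUC$ property.
   Context: $\mathrm{dist}(A,B)=\inf\{\|a-b\|:a\in A,b\in B\}$. The ordered pair $(A,B)$ has the $UC$ property if for all sequences $\{x_n\},\{z_n\}\subset A$, $\{y_n\}\subset B$ with $\lim_n\|x_n-y_n\|=\lim_n\|z_n-y_n\|=\mathrm{dist}(A,B)$ one has $\lim_n\|x_n-z_n\|=0$. It has the bounded $UC$ property ($BUC$) if the same implication holds whenever in addition $\{x_n\}$ and $\{z_n\}$ are bounded. *)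

theory Defs
  imports "HOL-Analysis.Analysis"
begin

text \<open>The space X: elements are sequences u indexed by n >= 2 with u n in R^2
  (represented as real \<times> real); entries with index n < 2 are forced to be 0.\<close>

definition pnorm :: "nat \<Rightarrow> real \<times> real \<Rightarrow> real" where
  "pnorm n v = (\<bar>fst v\<bar> powr real n + \<bar>snd v\<bar> powr real n) powr (1 / real n)"

definition inX :: "(nat \<Rightarrow> real \<times> real) \<Rightarrow> bool" where
  "inX u \<longleftrightarrow> (\<forall>n<2. u n = 0) \<and> summable (\<lambda>n. (pnorm n (u n))\<^sup>2)"

definition Xnorm :: "(nat \<Rightarrow> real \<times> real) \<Rightarrow> real" where
  "Xnorm u = sqrt (\<Sum>n. (pnorm n (u n))\<^sup>2)"

definition BX :: "(nat \<Rightarrow> real \<times> real) set" where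
  "BX = {u. inX u \<and> Xnorm u \<le> 1}"

definition Bout :: "(nat \<Rightarrow> real \<times> real) set" where
  "Bout = {u. inX u \<and> Xnorm u \<ge> 2}"

definition distX :: "(nat \<Rightarrow> real \<times> real) set \<Rightarrow> (nat \<Rightarrow> real \<times> real) set \<Rightarrow> real" where
  "distX A C = Inf {Xnorm (a - c) | a c. a \<in> A \<and> c \<in> C}"

definition UC_prop :: "(nat \<Rightarrow> real \<times> real) set \<Rightarrow> (nat \<Rightarrow> real \<times> real) set \<Rightarrow> bool" where
  "UC_prop A C \<longleftrightarrow> (\<forall>x z y. (\<forall>k. x k \<in> A \<and> z k \<in> A \<and> y k \<in> C)
     \<and> (\<lambda>k. Xnorm (x k - y k)) \<longlonglongrightarrow> distX A C
     \<and> (\<lambda>k. Xnorm (z k - y k)) \<longlonglongrightarrow> distX A C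
     \<longrightarrow> (\<lambda>k. Xnorm (x k - z k)) \<longlonglongrightarrow> 0)"

definition BUC_prop :: "(nat \<Rightarrow> real \<times> real) set \<Rightarrow> (nat \<Rightarrow> real \<times> real) set \<Rightarrow> bool" where
  "BUC_prop A C \<longleftrightarrow> (\<forall>x z y. (\<forall>k. x k \<in> A \<and> z k \<in> A \<and> y k \<in> C)
     \<and> (\<exists>M. \<forall>k. Xnorm (x k) \<le> M \<and> Xnorm (z k) \<le> M)
     \<and> (\<lambda>k. Xnorm (x k - y k)) \<longlonglongrightarrow> distX A C
     \<and> (\<lambda>k. Xnorm (z k - y k)) \<longlonglongrightarrow> distX A C
     \<longrightarrow> (\<lambda>k. Xnorm (x k - z k)) \<longlonglongrightarrow> 0)"

end

theory Submission
  imports Defs "HOL-Real_Asymp.Real_Asymp"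
begin

text \<open>
  The \<open>\<ell>\<^sup>n\<close> norms on the coordinate planes satisfy Minkowski's inequality, so the norm of \<open>X\<close>
  is subadditive and \<open>dist(B\<^sub>X, B) = 1\<close>. Place the sequences in the coordinate plane \<open>n = k + 2\<close>:
  \<open>x\<^sub>k = (c, c)\<close> and \<open>z\<^sub>k = (c, -c)\<close> with \<open>c = 2 powr (-1/n)\<close> lie on the unit sphere, and
  \<open>y\<^sub>k = (2, 0)\<close>. As \<open>\<ell>\<^sup>\<infinity> \<le> \<ell>\<^sup>n \<le> 2 powr (1/n) \<cdot> \<ell>\<^sup>\<infinity>\<close>, both \<open>\<parallel>x\<^sub>k - y\<^sub>k\<parallel>\<close> and \<open>\<parallel>z\<^sub>k - y\<^sub>k\<parallel>\<close> approach the
  \<open>\<ell>\<^sup>\<infinity>\<close> distance \<open>2 - c \<longrightarrow> 1\<close>, whereas \<open>\<parallel>x\<^sub>k - z\<^sub>k\<parallel> = 2c \<longrightarrow> 2\<close>.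
\<close>

lemma root_power_eq:
  assumes "n \<ge> 1" "(x::real) \<ge> 0"
  shows "(x ^ n) powr (1 / real n) = x"
  using assms by (cases "x = 0") (simp_all add: powr_realpow [symmetric] powr_powr)

lemma power_root_eq:
  assumes "n \<ge> 1" "(x::real) \<ge> 0"
  shows "(x powr (1 / real n)) ^ n = x"
  using assms by (cases "x = 0") (simp_all add: powr_realpow [symmetric] powr_powr)

lemma pnorm_altdef:
  assumes "n \<ge> 1"
  shows "pnorm n v = (\<bar>fst v\<bar> ^ n + \<bar>snd v\<bar> ^ n) powr (1 / real n)"
proof -
  have "\<bar>a\<bar> powr real n = \<bar>a\<bar> ^ n" for a :: real
    using assms by (cases "a = 0") (auto simp: powr_realpow)
  then show ?thesis by (simp add: pnorm_def)
qed

lemma pnorm_nonneg: "pnorm n v \<ge> 0"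
  by (simp add: pnorm_def)

lemma pnorm_zero [simp]: "pnorm n 0 = 0"
  by (simp add: pnorm_def)

lemma pnorm_uminus [simp]: "pnorm n (- v) = pnorm n v"
  by (simp add: pnorm_def)

lemma pnorm_power:
  assumes "n \<ge> 1"
  shows "pnorm n v ^ n = \<bar>fst v\<bar> ^ n + \<bar>snd v\<bar> ^ n"
  using assms by (simp add: pnorm_altdef power_root_eq)

lemma pnorm_eq_0_iff:
  assumes "n \<ge> 1"
  shows "pnorm n v = 0 \<longleftrightarrow> v = 0"
proof
  assume "pnorm n v = 0"
  then have "\<bar>fst v\<bar> ^ n + \<bar>snd v\<bar> ^ n = 0"
    using pnorm_power [OF assms, of v] assms by (simp add: power_0_left)
  then show "v = 0"
    using assms by (simp add: add_nonneg_eq_0_iff prod_eq_iff)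
qed simp

lemma power_sum_div_le_convex:
  fixes A B s r :: real
  assumes "A > 0" "B > 0" "s \<ge> 0" "r \<ge> 0"
  shows "((s + r) / (A + B)) ^ n \<le> A / (A + B) * (s / A) ^ n + B / (A + B) * (r / B) ^ n"
proof -
  have convex: "convex_on {0::real..} (\<lambda>x. x ^ n)"
    by (cases "even n") (auto intro: convex_power_odd convex_on_subset [OF convex_power_even])
  define t where "t = B / (A + B)"
  have t: "0 \<le> t" "t \<le> 1" "1 - t = A / (A + B)"
    using assms by (auto simp: t_def field_simps)
  have "(1 - t) * (s / A) + t * (r / B) = (s + r) / (A + B)"
  proof -
    have "(1 - t) * (s / A) = s / (A + B)"
      using assms by (simp add: t(3))
    moreover have "t * (r / B) = r / (A + B)"
      using assms by (simp add: t_def)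
    ultimately
    show ?thesis by (simp add: add_divide_distrib)
  qed
  moreover have "((1 - t) *\<^sub>R (s / A) + t *\<^sub>R (r / B)) ^ n \<le> (1 - t) * (s / A) ^ n + t * (r / B) ^ n"
    using convex_onD [OF convex t(1,2), of "s / A" "r / B"] assms by simp
  ultimately show ?thesis
    unfolding t(3) [symmetric] t_def [symmetric] by simp
qed

lemma pnorm_normalized_power_sum:
  assumes "n \<ge> 1" "pnorm n w > 0"
  shows "(\<bar>fst w\<bar> / pnorm n w) ^ n + (\<bar>snd w\<bar> / pnorm n w) ^ n = 1"
  using assms by (simp add: power_divide add_divide_distrib [symmetric] pnorm_power [symmetric])

lemma pnorm_0_eq: "pnorm 0 v = (if v = 0 then 0 else 1)"
  by (cases v) (auto simp: pnorm_def prod_eq_iff)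

lemma pnorm_triangle: "pnorm n (u + v) \<le> pnorm n u + pnorm n v"
proof (cases "n = 0 \<or> u = 0 \<or> v = 0")
  case True
  then consider "n = 0" | "u = 0" | "v = 0" by blast
  then show ?thesis
    by cases (simp_all add: pnorm_0_eq pnorm_nonneg)
next
  case False
  then have n: "n \<ge> 1"
    by simp
  have AB: "pnorm n u > 0" "pnorm n v > 0"
    using False pnorm_nonneg [of n u] pnorm_nonneg [of n v] pnorm_eq_0_iff [OF n, of u] pnorm_eq_0_iff [OF n, of v]
    by linarith+
  define A B where "A = pnorm n u" and "B = pnorm n v"
  have coord: "(\<bar>a + b\<bar> / (A + B)) ^ n \<le> A / (A + B) * (\<bar>a\<bar> / A) ^ n + B / (A + B) * (\<bar>b\<bar> / B) ^ n"
    for a b :: real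
  proof -
    have "(\<bar>a + b\<bar> / (A + B)) ^ n \<le> ((\<bar>a\<bar> + \<bar>b\<bar>) / (A + B)) ^ n"
      using AB by (intro power_mono divide_right_mono abs_triangle_ineq) (auto simp: A_def B_def)
    also have "\<dots> \<le> A / (A + B) * (\<bar>a\<bar> / A) ^ n + B / (A + B) * (\<bar>b\<bar> / B) ^ n"
      using AB by (intro power_sum_div_le_convex) (auto simp: A_def B_def)
    finally show ?thesis .
  qed
  have "(\<bar>fst (u + v)\<bar> / (A + B)) ^ n + (\<bar>snd (u + v)\<bar> / (A + B)) ^ n
        \<le> A / (A + B) * ((\<bar>fst u\<bar> / A) ^ n + (\<bar>snd u\<bar> / A) ^ n)
          + B / (A + B) * ((\<bar>fst v\<bar> / B) ^ n + (\<bar>snd v\<bar> / B) ^ n)"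
    using add_mono [OF coord [of "fst u" "fst v"] coord [of "snd u" "snd v"]]
    by (simp add: algebra_simps)
  also have "\<dots> = A / (A + B) + B / (A + B)"
    using pnorm_normalized_power_sum [OF n AB(1), folded A_def]
      pnorm_normalized_power_sum [OF n AB(2), folded B_def] by simp
  also have "\<dots> = 1"
    using AB by (simp add: A_def B_def add_divide_distrib [symmetric])
  finally have "pnorm n (u + v) ^ n \<le> (A + B) ^ n"
    using AB by (simp add: pnorm_power [OF n] power_divide add_divide_distrib [symmetric] A_def B_def)
  then show ?thesis
    using AB n pnorm_nonneg [of n "u + v"] by (simp add: A_def B_def power_mono_iff)
qed

lemma pnorm_axis:
  assumes "n \<ge> 1"
  shows "pnorm n (a, 0) = \<bar>a\<bar>" and "pnorm n (0, a) = \<bar>a\<bar>"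
  using assms by (simp_all add: pnorm_altdef root_power_eq power_0_left)

lemma pnorm_diagonal:
  assumes "n \<ge> 1" "\<bar>a\<bar> = \<bar>b\<bar>"
  shows "pnorm n (a, b) = 2 powr (1 / real n) * \<bar>b\<bar>"
  using assms by (simp add: pnorm_altdef powr_mult root_power_eq)

lemma pnorm_max_bounds:
  assumes "n \<ge> 1"
  shows "max \<bar>fst v\<bar> \<bar>snd v\<bar> \<le> pnorm n v"
    and "pnorm n v \<le> 2 powr (1 / real n) * max \<bar>fst v\<bar> \<bar>snd v\<bar>"
proof -
  define M where "M = max \<bar>fst v\<bar> \<bar>snd v\<bar>"
  have "M ^ n \<le> \<bar>fst v\<bar> ^ n + \<bar>snd v\<bar> ^ n"
    by (simp add: M_def max_def)
  moreover have "\<bar>fst v\<bar> ^ n + \<bar>snd v\<bar> ^ n \<le> 2 * M ^ n"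
    using power_mono [of "\<bar>fst v\<bar>" M n] power_mono [of "\<bar>snd v\<bar>" M n] by (simp add: M_def)
  ultimately have "(M ^ n) powr (1 / real n) \<le> pnorm n v"
    and "pnorm n v \<le> (2 * M ^ n) powr (1 / real n)"
    using assms by (simp_all add: pnorm_altdef powr_mono2)
  then show "M \<le> pnorm n v" and "pnorm n v \<le> 2 powr (1 / real n) * M"
    using assms by (simp_all add: M_def powr_mult root_power_eq)
qed

lemma tendsto_pnorm_max:
  assumes m: "filterlim m at_top sequentially"
    and lim: "(\<lambda>k. max \<bar>fst (w k)\<bar> \<bar>snd (w k)\<bar>) \<longlonglongrightarrow> L"
  shows "(\<lambda>k. pnorm (m k) (w k)) \<longlonglongrightarrow> L"
proof (rule real_tendsto_sandwich)
  have ev: "eventually (\<lambda>k. m k \<ge> 1) sequentially"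
    using filterlim_at_top [THEN iffD1, OF m] by blast
  show "eventually (\<lambda>k. max \<bar>fst (w k)\<bar> \<bar>snd (w k)\<bar> \<le> pnorm (m k) (w k)) sequentially"
    using ev by eventually_elim (rule pnorm_max_bounds)
  show "eventually (\<lambda>k. pnorm (m k) (w k)
      \<le> 2 powr (1 / real (m k)) * max \<bar>fst (w k)\<bar> \<bar>snd (w k)\<bar>) sequentially"
    using ev by eventually_elim (rule pnorm_max_bounds)
  have "(\<lambda>n. 2 powr (1 / real n)) \<longlonglongrightarrow> 1"
    by real_asymp
  then have "(\<lambda>k. 2 powr (1 / real (m k))) \<longlonglongrightarrow> 1"
    using filterlim_compose m by blast
  then show "(\<lambda>k. 2 powr (1 / real (m k)) * max \<bar>fst (w k)\<bar> \<bar>snd (w k)\<bar>) \<longlonglongrightarrow> L"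
    using tendsto_mult [OF _ lim] by fastforce
qed (fact lim)

lemma suminf_square_triangle:
  fixes f g h :: "nat \<Rightarrow> real"
  assumes f: "summable (\<lambda>n. (f n)\<^sup>2)" and g: "summable (\<lambda>n. (g n)\<^sup>2)"
    and h: "\<And>n. 0 \<le> h n" "\<And>n. h n \<le> f n + g n"
  shows "summable (\<lambda>n. (h n)\<^sup>2)"
    and "sqrt (\<Sum>n. (h n)\<^sup>2) \<le> sqrt (\<Sum>n. (f n)\<^sup>2) + sqrt (\<Sum>n. (g n)\<^sup>2)"
proof -
  have h_le: "(h n)\<^sup>2 \<le> 2 * (f n)\<^sup>2 + 2 * (g n)\<^sup>2" for n
  proof -
    have "(h n)\<^sup>2 \<le> (f n + g n)\<^sup>2"
      using h [of n] by (intro power_mono) auto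
    also have "\<dots> \<le> 2 * (f n)\<^sup>2 + 2 * (g n)\<^sup>2"
      using sum_squares_bound [of "f n" "g n"] by (simp add: power2_sum)
    finally show ?thesis .
  qed
  show hs: "summable (\<lambda>n. (h n)\<^sup>2)"
  proof (rule summable_comparison_test' [where N = 0])
    show "summable (\<lambda>n. 2 * (f n)\<^sup>2 + 2 * (g n)\<^sup>2)"
      using f g by (intro summable_add summable_mult)
  qed (use h_le in simp)
  have partial: "sqrt (\<Sum>n<N. (h n)\<^sup>2) \<le> sqrt (\<Sum>n. (f n)\<^sup>2) + sqrt (\<Sum>n. (g n)\<^sup>2)" for N
  proof -
    have "sqrt (\<Sum>n<N. (h n)\<^sup>2) \<le> L2_set (\<lambda>n. f n + g n) {..<N}"
      unfolding L2_set_def using h by (intro real_sqrt_le_mono sum_mono power_mono) auto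
    also have "\<dots> \<le> L2_set f {..<N} + L2_set g {..<N}"
      by (rule L2_set_triangle_ineq)
    also have "\<dots> \<le> sqrt (\<Sum>n. (f n)\<^sup>2) + sqrt (\<Sum>n. (g n)\<^sup>2)"
      unfolding L2_set_def using f g by (intro add_mono real_sqrt_le_mono sum_le_suminf) auto
    finally show ?thesis .
  qed
  show "sqrt (\<Sum>n. (h n)\<^sup>2) \<le> sqrt (\<Sum>n. (f n)\<^sup>2) + sqrt (\<Sum>n. (g n)\<^sup>2)"
  proof (rule LIMSEQ_le_const2)
    show "(\<lambda>N. sqrt (\<Sum>n<N. (h n)\<^sup>2)) \<longlonglongrightarrow> sqrt (\<Sum>n. (h n)\<^sup>2)"
      using hs by (intro tendsto_real_sqrt summable_LIMSEQ)
  qed (use partial in simp)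
qed

lemma Xnorm_uminus [simp]: "Xnorm (- u) = Xnorm u"
  by (simp add: Xnorm_def)

lemma
  assumes "summable (\<lambda>n. (pnorm n (u n))\<^sup>2)" "summable (\<lambda>n. (pnorm n (v n))\<^sup>2)"
  shows summable_pnorm_add: "summable (\<lambda>n. (pnorm n (u n + v n))\<^sup>2)"
    and Xnorm_triangle: "Xnorm (\<lambda>n. u n + v n) \<le> Xnorm u + Xnorm v"
  using suminf_square_triangle [OF assms pnorm_nonneg pnorm_triangle]
  by (simp_all add: Xnorm_def)

lemma summable_pnorm_diff:
  assumes "inX u" "inX v"
  shows "summable (\<lambda>n. (pnorm n ((u - v) n))\<^sup>2)"
  using summable_pnorm_add [of u "- v"] assms by (simp add: inX_def)

definition single_coord :: "nat \<Rightarrow> real \<times> real \<Rightarrow> nat \<Rightarrow> real \<times> real" where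
  "single_coord m w = (\<lambda>n. if n = m then w else 0)"

lemma sums_pnorm_single_coord: "(\<lambda>n. (pnorm n (single_coord m w n))\<^sup>2) sums (pnorm m w)\<^sup>2"
proof -
  have "(\<lambda>n. (pnorm n (single_coord m w n))\<^sup>2) = (\<lambda>n. if n = m then (pnorm m w)\<^sup>2 else 0)"
    by (simp add: single_coord_def fun_eq_iff)
  then show ?thesis
    using sums_single [of m "\<lambda>_. (pnorm m w)\<^sup>2"] by simp
qed

lemma Xnorm_single_coord: "Xnorm (single_coord m w) = pnorm m w"
  using sums_pnorm_single_coord by (simp add: Xnorm_def sums_iff pnorm_nonneg)

lemma inX_single_coord: "m \<ge> 2 \<Longrightarrow> inX (single_coord m w)"
  using sums_pnorm_single_coord by (auto simp: inX_def single_coord_def sums_iff)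

lemma single_coord_diff: "single_coord m w - single_coord m w' = single_coord m (w - w')"
  by (simp add: single_coord_def fun_eq_iff)

lemma distX_BX_Bout: "distX BX Bout = 1"
proof -
  have lower: "Xnorm (a - c) \<ge> 1" if "a \<in> BX" "c \<in> Bout" for a c
  proof -
    have a: "inX a" "Xnorm a \<le> 1" and c: "inX c" "Xnorm c \<ge> 2"
      using that by (auto simp: BX_def Bout_def)
    have "c - a = - (a - c)"
      by (simp add: fun_eq_iff)
    then have "Xnorm (c - a) = Xnorm (a - c)"
      by simp
    moreover have "Xnorm (\<lambda>n. a n + (c - a) n) \<le> Xnorm a + Xnorm (c - a)"
      using a c summable_pnorm_diff [OF c(1) a(1)] by (intro Xnorm_triangle) (auto simp: inX_def)
    ultimately show ?thesis
      using a c by simp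
  qed
  have "single_coord 2 (1, 0) \<in> BX" "single_coord 2 (2, 0) \<in> Bout"
    "Xnorm (single_coord 2 (1, 0) - single_coord 2 (2, 0)) = 1"
    using inX_single_coord [of 2]
    by (simp_all add: BX_def Bout_def Xnorm_single_coord single_coord_diff pnorm_altdef)
  then have "1 \<in> {Xnorm (a - c) | a c. a \<in> BX \<and> c \<in> Bout}"
    by force
  then show ?thesis
    unfolding distX_def using lower by (intro cInf_eq_minimum) auto
qed

lemma UC_failure_witnesses:
  obtains x z y :: "nat \<Rightarrow> nat \<Rightarrow> real \<times> real"
  where "\<forall>k. x k \<in> BX \<and> z k \<in> BX \<and> y k \<in> Bout"
    and "\<forall>k. Xnorm (x k) = 1 \<and> Xnorm (z k) = 1"
    and "(\<lambda>k. Xnorm (x k - y k)) \<longlonglongrightarrow> 1" "(\<lambda>k. Xnorm (z k - y k)) \<longlonglongrightarrow> 1"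
    and "(\<lambda>k. Xnorm (x k - z k)) \<longlonglongrightarrow> 2"
proof -
  define c where "c k = inverse (2 powr (1 / real (k + 2)))" for k :: nat
  have c: "0 < c k" "c k \<le> 1" "2 powr (1 / real (k + 2)) * c k = 1" for k
    using ge_one_powr_ge_zero [of 2 "1 / real (k + 2)"] by (auto simp: c_def inverse_le_1_iff)
  have c_lim: "c \<longlonglongrightarrow> 1"
    unfolding c_def by real_asymp
  define y where "y k = single_coord (k + 2) (2, 0)" for k
  have on_unit_sphere: "single_coord (k + 2) (c k, b) \<in> BX \<and> Xnorm (single_coord (k + 2) (c k, b)) = 1"
    if "\<bar>b\<bar> = c k" for k b
    using that c [of k] inX_single_coord [of "k + 2"]
    by (simp add: BX_def Xnorm_single_coord pnorm_diagonal)
  have tendsto_y: "(\<lambda>k. Xnorm (single_coord (k + 2) (c k, b k) - y k)) \<longlonglongrightarrow> 1"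
    if "\<And>k. \<bar>b k\<bar> = c k" for b
    unfolding y_def single_coord_diff Xnorm_single_coord
  proof (rule tendsto_pnorm_max)
    show "filterlim (\<lambda>k. k + 2) at_top sequentially"
      by (rule filterlim_add_const_nat_at_top)
    have "max \<bar>fst ((c k, b k) - (2, 0))\<bar> \<bar>snd ((c k, b k) - (2, 0))\<bar> = 2 - c k" for k
      using that [of k] c [of k] by (simp add: max_def)
    then show "(\<lambda>k. max \<bar>fst ((c k, b k) - (2, 0))\<bar> \<bar>snd ((c k, b k) - (2, 0))\<bar>) \<longlonglongrightarrow> 1"
      using tendsto_diff [OF tendsto_const c_lim, of 2] by simp
  qed
  have y_in: "y k \<in> Bout" for k
    using inX_single_coord [of "k + 2"] by (simp add: y_def Bout_def Xnorm_single_coord pnorm_axis)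
  show thesis
  proof (rule that [of "\<lambda>k. single_coord (k + 2) (c k, c k)" "\<lambda>k. single_coord (k + 2) (c k, - c k)" y])
    have "Xnorm (single_coord (k + 2) (c k, c k) - single_coord (k + 2) (c k, - c k)) = 2 * c k" for k
      using c [of k] by (simp add: single_coord_diff Xnorm_single_coord pnorm_axis)
    then show "(\<lambda>k. Xnorm (single_coord (k + 2) (c k, c k) - single_coord (k + 2) (c k, - c k))) \<longlonglongrightarrow> 2"
      using tendsto_mult [OF tendsto_const c_lim, of 2] by simp
  qed (use on_unit_sphere y_in c tendsto_y in \<open>auto simp: less_imp_le\<close>)
qed

theorem mainTheorem18:
  shows "(\<exists>x z y. (\<forall>k. x k \<in> BX \<and> z k \<in> BX \<and> y k \<in> Bout)
      \<and> (\<exists>M. \<forall>k. Xnorm (x k) \<le> M \<and> Xnorm (z k) \<le> M)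
      \<and> distX BX Bout = 1
      \<and> (\<lambda>k. Xnorm (x k - y k)) \<longlonglongrightarrow> distX BX Bout
      \<and> (\<lambda>k. Xnorm (z k - y k)) \<longlonglongrightarrow> distX BX Bout
      \<and> (\<lambda>k. Xnorm (x k - z k)) \<longlonglongrightarrow> 2)
    \<and> \<not> UC_prop BX Bout \<and> \<not> BUC_prop BX Bout"
proof -
  obtain x z y where mem: "\<forall>k. x k \<in> BX \<and> z k \<in> BX \<and> y k \<in> Bout"
    and norm: "\<forall>k. Xnorm (x k) = 1 \<and> Xnorm (z k) = 1"
    and lim: "(\<lambda>k. Xnorm (x k - y k)) \<longlonglongrightarrow> 1" "(\<lambda>k. Xnorm (z k - y k)) \<longlonglongrightarrow> 1"
      "(\<lambda>k. Xnorm (x k - z k)) \<longlonglongrightarrow> 2"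
    by (rule UC_failure_witnesses)
  have bounded: "\<exists>M. \<forall>k. Xnorm (x k) \<le> M \<and> Xnorm (z k) \<le> M"
    using norm by (intro exI [of _ 1]) simp
  have not_BUC: "\<not> BUC_prop BX Bout"
  proof
    assume "BUC_prop BX Bout"
    then have "(\<lambda>k. Xnorm (x k - z k)) \<longlonglongrightarrow> 0"
      using mem bounded lim(1,2) unfolding BUC_prop_def distX_BX_Bout by blast
    with lim(3) show False
      using LIMSEQ_unique by fastforce
  qed
  then have "\<not> UC_prop BX Bout"
    unfolding UC_prop_def BUC_prop_def by blast
  with not_BUC show ?thesis
    using mem bounded lim unfolding distX_BX_Bout by blast
qed

end
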